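(* Let $p(g\mid\mathbf w)=\sum_{k\in\mathcal A}\theta_kP_{(k)}(w_{-k},g)$ be an imitation kernel on a finite set $G$ with $\gcd(\mathcal A)=1$, and assume the $G$-stochastic function $P_{(\cdot)}$ is irreducible and aperiodic. Let $\hat\lambda$ be the unique invariant distribution of $\hat P=\sum_{k\in\mathcal A}\theta_kP_{(k)}$. Then for every $n\in\mathbb Z$ and every configuration $\mathbf w\in G^{\mathbb Z}$, the law of $X_n^{r,\mathbf w}$ converges to $\hat\lambda$ as $r\to-\infty$.
   Context: $\mathcal A\subset\mathbb N_+$, $\theta$ a probability on $\mathcal A$ with $\theta_k>0$, $P_{(k)}$ stochastic matrices on $G$. Words $\mathcal A^*=\bigcup_{n\ge1}\mathcal A^n$, $P_{\mathbf a}=P_{(a_n)}\cdots P_{(a_1)}$ and depth $s(\mathbf a)=\sum a_i$ for $\mathbf a=(a_1,\dots,a_n)$. $P_{(\cdot)}$ is irreducible if for all $i,j$ some word has $P_{\mathbf a}(i,j)>0$; aperiodic if moreover $\gcd\{s(\mathbf a):P_{\mathbf a}(i,i)>0\}=1$ for every $i$. For $\mathbf w\in G^{\mathbb Z}$ and $r\in\mathbb Z$, $\mathbf X^{r,\mathbf w}$ is the process with $X^{r,\mathbf w}_n=w_n$ for $n\le r$ and $P(X_n^{r,\mathbf w}=g\mid X_{n-1}^{r,\mathbf w},X_{n-2}^{r,\mathbf w},\dots)=p(g\mid X_{n-1}^{r,\mathbf w},X_{n-2}^{r,\mathbf w},\dots)$ a.s. for $n>r$. *)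

theory Defs
  imports "HOL-Probability.Probability"
begin

text \<open>Stochastic matrices on G are given by their rows: P k i is the probability
distribution of the next state given current state i, so P_(k)(i,j) = pmf (P k i) j.
The probability theta on the alphabet A is a pmf on nat whose support is A.\<close>

text \<open>Entry (i,j) of the word matrix P_a = P_(a_n) ... P_(a_1) for a = [a_1,...,a_n].
Recursion: P_(a_1 # as) = P_as * P_(a_1).\<close>
fun word_mat :: "(nat \<Rightarrow> 'g::finite \<Rightarrow> 'g pmf) \<Rightarrow> nat list \<Rightarrow> 'g \<Rightarrow> 'g \<Rightarrow> real" where
  "word_mat P [] i j = (if i = j then 1 else 0)"
| "word_mat P (a # as) i j = (\<Sum>h\<in>UNIV. word_mat P as i h * pmf (P a h) j)"

definition depth :: "nat list \<Rightarrow> nat" where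
  "depth a = sum_list a"

definition words :: "nat set \<Rightarrow> nat list set" where
  "words A = {a. a \<noteq> [] \<and> set a \<subseteq> A}"

definition irreducible_sf :: "nat set \<Rightarrow> (nat \<Rightarrow> 'g::finite \<Rightarrow> 'g pmf) \<Rightarrow> bool" where
  "irreducible_sf A P \<longleftrightarrow> (\<forall>i j. \<exists>a\<in>words A. word_mat P a i j > 0)"

definition aperiodic_sf :: "nat set \<Rightarrow> (nat \<Rightarrow> 'g::finite \<Rightarrow> 'g pmf) \<Rightarrow> bool" where
  "aperiodic_sf A P \<longleftrightarrow> irreducible_sf A P \<and>
     (\<forall>i. Gcd (depth ` {a\<in>words A. word_mat P a i i > 0}) = 1)"

definition hatP :: "nat pmf \<Rightarrow> (nat \<Rightarrow> 'g \<Rightarrow> 'g pmf) \<Rightarrow> 'g \<Rightarrow> 'g pmf" where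
  "hatP \<theta> P i = bind_pmf \<theta> (\<lambda>k. P k i)"

definition invariant_dist :: "('g \<Rightarrow> 'g pmf) \<Rightarrow> 'g pmf \<Rightarrow> bool" where
  "invariant_dist Q \<mu> \<longleftrightarrow> bind_pmf \<mu> Q = \<mu>"

definition imit_kernel :: "nat pmf \<Rightarrow> (nat \<Rightarrow> 'g \<Rightarrow> 'g pmf) \<Rightarrow> (int \<Rightarrow> 'g) \<Rightarrow> int \<Rightarrow> 'g pmf" where
  "imit_kernel \<theta> P x t = bind_pmf \<theta> (\<lambda>k. P k (x (t - int k)))"

text \<open>Joint law of the path of X^{r,w} after m steps, i.e. of (X_s)_{s \<le> r+m}
 (values at times > r+m are still those of w and are irrelevant).\<close>
fun traj :: "nat pmf \<Rightarrow> (nat \<Rightarrow> 'g \<Rightarrow> 'g pmf) \<Rightarrow> int \<Rightarrow> (int \<Rightarrow> 'g) \<Rightarrow> nat \<Rightarrow> (int \<Rightarrow> 'g) pmf" where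
  "traj \<theta> P r w 0 = return_pmf w"
| "traj \<theta> P r w (Suc m) = bind_pmf (traj \<theta> P r w m)
     (\<lambda>x. map_pmf (\<lambda>g. x(r + int m + 1 := g)) (imit_kernel \<theta> P x (r + int m + 1)))"

definition law_X :: "nat pmf \<Rightarrow> (nat \<Rightarrow> 'g \<Rightarrow> 'g pmf) \<Rightarrow> int \<Rightarrow> (int \<Rightarrow> 'g) \<Rightarrow> int \<Rightarrow> 'g pmf" where
  "law_X \<theta> P r w n = map_pmf (\<lambda>x. x n) (traj \<theta> P r w (nat (n - r)))"

end

theory Submission
  imports Defs "HOL-Library.Diagonal_Subsequence"
begin

text \<open>
  If the law of \<open>X\<^sub>n\<close> did not converge to \<open>\<lambda>\<close> as \<open>r \<rightarrow> -\<infinity>\<close>, then by compactness the laws of the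
  whole process would converge, along a subsequence, to a family \<open>(\<nu>\<^sub>t)\<^sub>t\<^sub>\<in>\<^sub>\<int>\<close> of distributions
  with \<open>\<nu>\<^sub>n \<noteq> \<lambda>\<close> solving \<open>\<nu>\<^sub>t = \<Sum>\<^sub>k \<theta>\<^sub>k \<nu>\<^sub>t\<^sub>-\<^sub>k P\<^sub>k\<close> for all \<open>t\<close>.  But every such entire
  solution is constant in time, hence invariant, hence equal to \<open>\<lambda>\<close>: the ratio
  \<open>h\<^sub>t(j) = \<nu>\<^sub>t(j) / \<lambda>(j)\<close> is bounded and harmonic for the time reversal of the chain, and a
  maximum principle along loops shows that \<open>h\<close> is periodic in \<open>t\<close> with every period that is a
  loop depth common to all states.  Aperiodicity makes these periods coprime.
\<close>

section \<open>Finite distributions and compactness\<close>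

lemma integrable_measure_pmf_bounded:
  fixes f :: "'a \<Rightarrow> real"
  assumes "\<And>x. \<bar>f x\<bar> \<le> B"
  shows "integrable (measure_pmf p) f"
  using assms by (intro measure_pmf.integrable_const_bound[where B=B]) auto

lemma pmf_times_le_expectation:
  fixes f :: "'a \<Rightarrow> real"
  assumes "integrable (measure_pmf p) f" "\<And>y. 0 \<le> f y"
  shows "pmf p x * f x \<le> measure_pmf.expectation p f"
proof -
  have "pmf p x * f x = measure_pmf.expectation p (\<lambda>y. f x * indicator {x} y)"
    by (simp add: measure_pmf_single mult.commute)
  also have "\<dots> \<le> measure_pmf.expectation p f"
    by (intro integral_mono assms integrable_measure_pmf_bounded[where B="\<bar>f x\<bar>"])
       (auto split: split_indicator simp: assms)
  finally show ?thesis .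
qed

lemma pmf_bind_mixture:
  fixes P :: "nat \<Rightarrow> 'g::finite \<Rightarrow> 'g pmf"
  shows "pmf (bind_pmf \<theta> (\<lambda>k. bind_pmf (\<mu> k) (P k))) j
           = measure_pmf.expectation \<theta> (\<lambda>k. \<Sum>i\<in>UNIV. pmf (\<mu> k) i * pmf (P k i) j)"
  by (simp add: pmf_bind integral_measure_pmf_real[of UNIV] mult.commute)

lemma sum_pmf_times_pmf_le_1:
  fixes \<mu> :: "'g::finite pmf"
  shows "\<bar>\<Sum>i\<in>UNIV. pmf \<mu> i * pmf (Q i) j\<bar> \<le> 1"
proof -
  have "(\<Sum>i\<in>UNIV. pmf \<mu> i * pmf (Q i) j) \<le> (\<Sum>i\<in>UNIV. pmf \<mu> i)"
    by (intro sum_mono) (simp add: mult_left_le pmf_le_1)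
  also have "\<dots> = 1" by (simp add: sum_pmf_eq_1)
  finally show ?thesis by (simp add: sum_nonneg)
qed

lemma bounded_seq_pointwise_convergent_subseq:
  fixes F :: "nat \<Rightarrow> 'a::countable \<Rightarrow> real"
  assumes bnd: "\<And>m x. \<bar>F m x\<bar> \<le> B"
  shows "\<exists>\<sigma> \<nu>. strict_mono \<sigma> \<and> (\<forall>x. (\<lambda>m. F (\<sigma> m) x) \<longlonglongrightarrow> \<nu> x)"
proof -
  interpret subseqs "\<lambda>n s. convergent (\<lambda>m. F (s m) (from_nat n))"
  proof
    fix n and s :: "nat \<Rightarrow> nat"
    obtain r where r: "strict_mono r" "monoseq (\<lambda>m. F (s (r m)) (from_nat n))"
      using seq_monosub[of "\<lambda>m. F (s m) (from_nat n)"] by blast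
    have "Bseq (\<lambda>m. F (s (r m)) (from_nat n))" using bnd by (intro BseqI'[where K=B]) simp
    with r show "\<exists>r. strict_mono r \<and> convergent (\<lambda>m. F ((s \<circ> r) m) (from_nat n))"
      by (auto simp: o_def intro: Bseq_monoseq_convergent)
  qed
  have "convergent (\<lambda>m. F (diagseq m) x)" for x
  proof -
    have "convergent (\<lambda>m. F ((diagseq \<circ> (+) (Suc (to_nat x))) m) (from_nat (to_nat x)))"
      by (rule diagseq_holds) (auto simp: o_def dest: convergent_subseq_convergent[unfolded o_def])
    then have "convergent (\<lambda>m. F (diagseq (m + Suc (to_nat x))) x)"
      by (simp add: o_def add.commute)
    then show ?thesis by (rule convergent_ignore_initial_segment[THEN iffD1])
  qed
  then show ?thesis
    using subseq_diagseq by (intro exI[of _ diagseq] exI[of _ "\<lambda>x. lim (\<lambda>m. F (diagseq m) x)"])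
      (auto simp: convergent_LIMSEQ_iff)
qed

section \<open>Periods of functions on the integers\<close>

lemma eq_1_if_dvd_choice_products:
  fixes L :: "'i::finite \<Rightarrow> nat set"
  assumes Gcd_L: "\<And>i. Gcd (L i) = 1"
    and dvd_prod: "\<And>d. (\<And>i. d i \<in> L i) \<Longrightarrow> p dvd (\<Prod>i\<in>UNIV. d i)"
  shows "p = 1"
proof -
  have "p dvd (\<Prod>i\<in>-T. d i)" if "finite T" "\<And>i. d i \<in> L i" for T d
    using that
  proof (induction T arbitrary: d rule: finite_induct)
    case empty
    then show ?case using dvd_prod by simp
  next
    case (insert x T)
    let ?Q = "\<Prod>i\<in>-insert x T. d i"
    have "p dvd ?Q * y" if "y \<in> L x" for y
    proof -
      have "p dvd (\<Prod>i\<in>-T. (d(x := y)) i)"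
        using insert.IH[of "d(x := y)"] insert.prems that by auto
      also have "(\<Prod>i\<in>-T. (d(x := y)) i) = y * (\<Prod>i\<in>-T-{x}. (d(x := y)) i)"
        using insert.hyps by (subst prod.remove[of _ x]) auto
      also have "(\<Prod>i\<in>-T-{x}. (d(x := y)) i) = ?Q"
        by (intro prod.cong) auto
      finally show ?thesis by (simp add: mult.commute)
    qed
    then have "p dvd Gcd ((*) ?Q ` L x)" by (auto intro: Gcd_greatest)
    then show ?case by (simp add: Gcd_mult Gcd_L)
  qed
  moreover have "\<forall>i. \<exists>y. y \<in> L i"
    using Gcd_L by (metis Gcd_empty all_not_in_conv zero_neq_one)
  then obtain d where "\<And>i. d i \<in> L i" by metis
  ultimately have "p dvd 1" by (metis Compl_UNIV_eq finite prod.empty)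
  then show ?thesis by simp
qed

definition periodic :: "(int \<Rightarrow> 'a) \<Rightarrow> nat \<Rightarrow> bool" where
  "periodic f p \<longleftrightarrow> (\<forall>t. f (t - int p) = f t)"

lemma periodic_mult:
  assumes "periodic f p"
  shows "periodic f (l * p)"
proof (induction l)
  case (Suc l)
  show ?case unfolding periodic_def
  proof
    fix t
    have "f (t - int (Suc l * p)) = f (t - int p - int (l * p))" by (simp add: algebra_simps)
    also have "\<dots> = f t"
      using Suc assms unfolding periodic_def by simp
    finally show "f (t - int (Suc l * p)) = f t" .
  qed
qed (simp add: periodic_def)

lemma periodic_diff:
  assumes "periodic f p" "periodic f q" "q \<le> p"
  shows "periodic f (p - q)"
  unfolding periodic_def
proof
  fix t
  have "f (t - int (p - q)) = f (t - int (p - q) - int q)"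
    using assms(2) unfolding periodic_def by simp
  also have "\<dots> = f t"
    using assms(1,3) unfolding periodic_def by simp
  finally show "f (t - int (p - q)) = f t" .
qed

lemma periodic_mod:
  assumes "periodic f p" "periodic f q"
  shows "periodic f (p mod q)"
proof -
  have "periodic f (p - p div q * q)"
    using assms by (intro periodic_diff periodic_mult) simp_all
  then show ?thesis by (simp add: minus_div_mult_eq_mod)
qed

lemma least_period_dvd:
  assumes "periodic f p" "0 < p" "periodic f q"
  shows "(LEAST p. 0 < p \<and> periodic f p) dvd q"
proof -
  let ?p0 = "LEAST p. 0 < p \<and> periodic f p"
  have p0: "0 < ?p0" "periodic f ?p0"
    using LeastI[of "\<lambda>p. 0 < p \<and> periodic f p" p] assms(1,2) by auto
  have "q mod ?p0 = 0"
  proof (rule ccontr)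
    assume "q mod ?p0 \<noteq> 0"
    then have "?p0 \<le> q mod ?p0"
      using periodic_mod[OF assms(3) p0(2)] by (intro Least_le) simp
    with p0(1) show False by (meson mod_less_divisor not_le)
  qed
  then show ?thesis by (rule mod_0_imp_dvd)
qed

lemma periodic_1_const:
  assumes "periodic f 1"
  shows "f t = f 0"
proof -
  have step: "f (t - 1) = f t" for t
    using assms by (simp add: periodic_def)
  show ?thesis
    by (induction t rule: int_induct[where k=0]) (simp_all add: step flip: step[of "_ + 1"])
qed

section \<open>Laws of the imitation process\<close>

lemma word_mat_nonneg: "0 \<le> word_mat P w i j"
  by (induction w arbitrary: j) (auto intro!: sum_nonneg)

lemma word_mat_Cons_pos:
  assumes "word_mat P (a # as) i j > 0"
  obtains h where "word_mat P as i h > 0" "pmf (P a h) j > 0"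
proof -
  have "0 < (\<Sum>h\<in>UNIV. word_mat P as i h * pmf (P a h) j)"
    using assms by simp
  then obtain h where "word_mat P as i h * pmf (P a h) j > 0"
    using sum_nonpos[of UNIV "\<lambda>h. word_mat P as i h * pmf (P a h) j"] by (meson not_le)
  then show ?thesis
    using that word_mat_nonneg[of P as i h] by (auto simp: zero_less_mult_iff)
qed

definition entire_solution :: "nat pmf \<Rightarrow> (nat \<Rightarrow> 'g \<Rightarrow> 'g pmf) \<Rightarrow> (int \<Rightarrow> 'g pmf) \<Rightarrow> bool" where
  "entire_solution \<theta> P \<nu> \<longleftrightarrow> (\<forall>t. \<nu> t = bind_pmf \<theta> (\<lambda>k. bind_pmf (\<nu> (t - int k)) (P k)))"

lemma pmf_entire_solution:
  fixes P :: "nat \<Rightarrow> 'g::finite \<Rightarrow> 'g pmf"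
  assumes "entire_solution \<theta> P \<nu>"
  shows "pmf (\<nu> t) j = measure_pmf.expectation \<theta> (\<lambda>k. \<Sum>i\<in>UNIV. pmf (\<nu> (t - int k)) i * pmf (P k i) j)"
proof -
  have "\<nu> t = bind_pmf \<theta> (\<lambda>k. bind_pmf (\<nu> (t - int k)) (P k))"
    by (rule assms[unfolded entire_solution_def, rule_format])
  then have "pmf (\<nu> t) j = pmf (bind_pmf \<theta> (\<lambda>k. bind_pmf (\<nu> (t - int k)) (P k))) j"
    by (rule arg_cong)
  then show ?thesis by (simp only: pmf_bind_mixture)
qed

lemma traj_marginal_Suc:
  assumes "t \<le> r + int m"
  shows "map_pmf (\<lambda>x. x t) (traj \<theta> P r w (Suc m)) = map_pmf (\<lambda>x. x t) (traj \<theta> P r w m)"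
proof -
  have "map_pmf (\<lambda>x. x t) (traj \<theta> P r w (Suc m)) = bind_pmf (traj \<theta> P r w m) (\<lambda>x. return_pmf (x t))"
    using assms by (simp add: map_bind_pmf map_pmf_comp cong: bind_pmf_cong)
  then show ?thesis by (simp add: map_pmf_def)
qed

lemma traj_marginal:
  assumes "nat (t - r) \<le> m"
  shows "map_pmf (\<lambda>x. x t) (traj \<theta> P r w m) = law_X \<theta> P r w t"
  using assms
proof (induction m)
  case (Suc m)
  show ?case
  proof (cases "nat (t - r) \<le> m")
    case True
    then have "t \<le> r + int m" by linarith
    then show ?thesis using Suc True traj_marginal_Suc by metis
  next
    case False
    then show ?thesis using Suc.prems by (simp add: law_X_def le_Suc_eq)
  qed
qed (simp add: law_X_def)

lemma law_X_recursion:
  assumes "r < t" and "0 \<notin> set_pmf \<theta>"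
  shows "law_X \<theta> P r w t = bind_pmf \<theta> (\<lambda>k. bind_pmf (law_X \<theta> P r w (t - int k)) (P k))"
proof -
  define m where "m = nat (t - r) - 1"
  have t: "t = r + int m + 1" "nat (t - r) = Suc m" using assms(1) unfolding m_def by auto
  have "law_X \<theta> P r w t = map_pmf (\<lambda>x. x t) (traj \<theta> P r w (Suc m))"
    by (simp only: law_X_def t(2))
  also have "\<dots> = bind_pmf (traj \<theta> P r w m) (\<lambda>x. imit_kernel \<theta> P x t)"
    by (simp add: t(1) map_bind_pmf map_pmf_comp)
  also have "\<dots> = bind_pmf \<theta> (\<lambda>k. bind_pmf (map_pmf (\<lambda>x. x (t - int k)) (traj \<theta> P r w m)) (P k))"
    unfolding imit_kernel_def by (subst bind_commute_pmf) (simp add: bind_map_pmf)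
  also have "\<dots> = bind_pmf \<theta> (\<lambda>k. bind_pmf (law_X \<theta> P r w (t - int k)) (P k))"
  proof (rule bind_pmf_cong[OF refl])
    fix k assume "k \<in> set_pmf \<theta>"
    with assms(2) have "nat (t - int k - r) \<le> m" using t by (cases k) auto
    then show "bind_pmf (map_pmf (\<lambda>x. x (t - int k)) (traj \<theta> P r w m)) (P k)
             = bind_pmf (law_X \<theta> P r w (t - int k)) (P k)"
      by (simp add: traj_marginal)
  qed
  finally show ?thesis .
qed

lemma limit_of_laws_entire_solution:
  fixes P :: "nat \<Rightarrow> 'g::finite \<Rightarrow> 'g pmf"
  assumes pos: "0 \<notin> set_pmf \<theta>"
    and to_bot: "\<And>t. eventually (\<lambda>m. R m < t) sequentially"
    and lim: "\<And>t j. (\<lambda>m. pmf (law_X \<theta> P (R m) w t) j) \<longlonglongrightarrow> \<nu> t j"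
  shows "\<exists>\<mu>. entire_solution \<theta> P \<mu> \<and> (\<forall>t j. pmf (\<mu> t) j = \<nu> t j)"
proof -
  have nonneg: "0 \<le> \<nu> t j" for t j
    by (rule LIMSEQ_le_const[OF lim]) simp
  have "(\<lambda>m. \<Sum>j\<in>UNIV. pmf (law_X \<theta> P (R m) w t) j) \<longlonglongrightarrow> (\<Sum>j\<in>UNIV. \<nu> t j)" for t
    by (intro tendsto_sum lim)
  then have sum_1: "(\<Sum>j\<in>UNIV. \<nu> t j) = 1" for t
    by (simp add: sum_pmf_eq_1 LIMSEQ_const_iff)
  define \<mu> where "\<mu> t = embed_pmf (\<nu> t)" for t
  have pmf_\<mu>: "pmf (\<mu> t) j = \<nu> t j" for t j
    unfolding \<mu>_def using nonneg sum_1
    by (subst pmf_embed_pmf) (auto simp: nn_integral_count_space_finite)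
  have "pmf (\<mu> t) j = pmf (bind_pmf \<theta> (\<lambda>k. bind_pmf (\<mu> (t - int k)) (P k))) j" for t j
  proof -
    define S where "S m = measure_pmf.expectation \<theta>
       (\<lambda>k. \<Sum>i\<in>UNIV. pmf (law_X \<theta> P (R m) w (t - int k)) i * pmf (P k i) j)" for m
    have "S \<longlonglongrightarrow> measure_pmf.expectation \<theta> (\<lambda>k. \<Sum>i\<in>UNIV. \<nu> (t - int k) i * pmf (P k i) j)"
      unfolding S_def
    proof (rule integral_dominated_convergence[where w="\<lambda>_. 1"])
      show "AE k in measure_pmf \<theta>. (\<lambda>m. \<Sum>i\<in>UNIV. pmf (law_X \<theta> P (R m) w (t - int k)) i * pmf (P k i) j)
              \<longlonglongrightarrow> (\<Sum>i\<in>UNIV. \<nu> (t - int k) i * pmf (P k i) j)"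
        by (intro AE_I2 tendsto_sum tendsto_mult_right lim)
    qed (simp_all add: sum_pmf_times_pmf_le_1)
    moreover have "pmf (law_X \<theta> P (R m) w t) j = S m" if "R m < t" for m
      unfolding S_def law_X_recursion[OF that pos] by (rule pmf_bind_mixture)
    then have "eventually (\<lambda>m. pmf (law_X \<theta> P (R m) w t) j = S m) sequentially"
      using to_bot[of t] by (auto elim: eventually_mono)
    then have "S \<longlonglongrightarrow> \<nu> t j"
      using lim[of t j] by (rule Lim_transform_eventually[rotated])
    ultimately show ?thesis
      by (simp add: pmf_\<mu> pmf_bind_mixture LIMSEQ_unique)
  qed
  then have "entire_solution \<theta> P \<mu>"
    unfolding entire_solution_def by (auto intro: pmf_eqI)
  with pmf_\<mu> show ?thesis by blast
qed

section \<open>Bounded harmonic functions of the reversed chain\<close>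

locale imitation =
  fixes \<theta> :: "nat pmf" and P :: "nat \<Rightarrow> 'g::finite \<Rightarrow> 'g pmf" and lam :: "'g pmf"
  assumes pos: "0 \<notin> set_pmf \<theta>"
    and aper: "aperiodic_sf (set_pmf \<theta>) P"
    and inv: "invariant_dist (hatP \<theta> P) lam"
    and uniq: "\<And>\<mu>. invariant_dist (hatP \<theta> P) \<mu> \<Longrightarrow> \<mu> = lam"
begin

lemma invariant_iff_entire_const:
  "invariant_dist (hatP \<theta> P) \<mu> \<longleftrightarrow> entire_solution \<theta> P (\<lambda>_. \<mu>)"
proof -
  have "bind_pmf \<mu> (hatP \<theta> P) = bind_pmf \<theta> (\<lambda>k. bind_pmf \<mu> (P k))"
    unfolding hatP_def by (rule bind_commute_pmf)
  then show ?thesis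
    unfolding invariant_dist_def entire_solution_def by (simp add: eq_commute)
qed

lemma lam_balance: "pmf lam j = measure_pmf.expectation \<theta> (\<lambda>k. \<Sum>i\<in>UNIV. pmf lam i * pmf (P k i) j)"
  by (rule pmf_entire_solution[OF inv[unfolded invariant_iff_entire_const]])

lemma lam_flow_le: "pmf \<theta> k * (pmf lam i * pmf (P k i) j) \<le> pmf lam j"
proof -
  have "pmf \<theta> k * (pmf lam i * pmf (P k i) j) \<le> pmf \<theta> k * (\<Sum>i\<in>UNIV. pmf lam i * pmf (P k i) j)"
    by (intro mult_left_mono member_le_sum) auto
  also have "\<dots> \<le> pmf lam j"
    unfolding lam_balance[of j]
    by (intro pmf_times_le_expectation integrable_measure_pmf_bounded[where B=1] sum_nonneg)
       (simp_all add: sum_pmf_times_pmf_le_1)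
  finally show ?thesis .
qed

lemma lam_pos: "pmf lam j > 0"
proof -
  have "pmf lam j > 0" if "set w \<subseteq> set_pmf \<theta>" "word_mat P w i j > 0" "pmf lam i > 0" for w i j
    using that
  proof (induction w arbitrary: j)
    case (Cons a as)
    obtain h where h: "word_mat P as i h > 0" "pmf (P a h) j > 0"
      using word_mat_Cons_pos[OF Cons.prems(2)] by blast
    have "0 < pmf \<theta> a * (pmf lam h * pmf (P a h) j)"
      using Cons h by (auto simp: pmf_positive)
    also have "\<dots> \<le> pmf lam j" by (rule lam_flow_le)
    finally show ?case .
  qed (auto split: if_splits)
  moreover obtain i where "i \<in> set_pmf lam"
    using set_pmf_not_empty by fast
  then have "pmf lam i > 0" by (rule pmf_positive)
  moreover obtain w where "set w \<subseteq> set_pmf \<theta>" "word_mat P w i j > 0"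
    using aper unfolding aperiodic_sf_def irreducible_sf_def words_def by blast
  ultimately show ?thesis by blast
qed

text \<open>Transition weights of the time reversal of the chain at stationarity.\<close>
definition rev_kernel :: "nat \<Rightarrow> 'g \<Rightarrow> 'g \<Rightarrow> real" where
  "rev_kernel k i j = pmf lam i * pmf (P k i) j / pmf lam j"

lemma rev_kernel_nonneg: "0 \<le> rev_kernel k i j"
  unfolding rev_kernel_def by simp

lemma rev_kernel_le: "rev_kernel k i j \<le> 1 / pmf lam j"
  unfolding rev_kernel_def using lam_pos[of j]
  by (intro divide_right_mono mult_le_one pmf_le_1) auto

lemma theta_rev_kernel_le_1: "pmf \<theta> k * rev_kernel k i j \<le> 1"
proof -
  have "pmf \<theta> k * rev_kernel k i j = pmf \<theta> k * (pmf lam i * pmf (P k i) j) / pmf lam j"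
    by (simp add: rev_kernel_def)
  also have "\<dots> \<le> pmf lam j / pmf lam j"
    using lam_pos[of j] lam_flow_le[of k i j] by (intro divide_right_mono) auto
  finally show ?thesis using lam_pos[of j] by simp
qed

lemma expectation_rev_kernel: "measure_pmf.expectation \<theta> (\<lambda>k. \<Sum>i\<in>UNIV. rev_kernel k i j) = 1"
proof -
  have "measure_pmf.expectation \<theta> (\<lambda>k. \<Sum>i\<in>UNIV. rev_kernel k i j)
      = measure_pmf.expectation \<theta> (\<lambda>k. \<Sum>i\<in>UNIV. pmf lam i * pmf (P k i) j) / pmf lam j"
    by (simp add: rev_kernel_def flip: sum_divide_distrib)
  also have "\<dots> = 1"
    using lam_pos[of j] by (simp only: lam_balance[of j, symmetric]) simp
  finally show ?thesis .
qed

definition harmonic :: "(int \<Rightarrow> 'g \<Rightarrow> real) \<Rightarrow> bool" where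
  "harmonic h \<longleftrightarrow>
     (\<forall>t j. h t j = measure_pmf.expectation \<theta> (\<lambda>k. \<Sum>i\<in>UNIV. rev_kernel k i j * h (t - int k) i))"

lemma integrable_rev_kernel:
  assumes "\<And>t j. \<bar>h t j\<bar> \<le> B"
  shows "integrable (measure_pmf \<theta>) (\<lambda>k. \<Sum>i\<in>UNIV. rev_kernel k i j * h (t - int k) i)"
proof (rule integrable_measure_pmf_bounded)
  fix k
  have bound: "\<bar>rev_kernel k i j * h (t - int k) i\<bar> \<le> 1 / pmf lam j * B" for i
  proof -
    have "\<bar>rev_kernel k i j * h (t - int k) i\<bar> = rev_kernel k i j * \<bar>h (t - int k) i\<bar>"
      by (simp add: abs_mult rev_kernel_nonneg)
    also have "\<dots> \<le> 1 / pmf lam j * B"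
      by (intro mult_mono rev_kernel_le assms) (simp_all add: rev_kernel_nonneg)
    finally show ?thesis .
  qed
  have "\<bar>\<Sum>i\<in>UNIV. rev_kernel k i j * h (t - int k) i\<bar> \<le> (\<Sum>i\<in>UNIV. \<bar>rev_kernel k i j * h (t - int k) i\<bar>)"
    by (rule sum_abs)
  also have "\<dots> \<le> (\<Sum>i\<in>(UNIV :: 'g set). 1 / pmf lam j * B)"
    by (rule sum_mono) (rule bound)
  finally show "\<bar>\<Sum>i\<in>UNIV. rev_kernel k i j * h (t - int k) i\<bar> \<le> real CARD('g) * (1 / pmf lam j * B)"
    by simp
qed

lemma harmonic_diff:
  assumes "harmonic h1" "harmonic h2" "\<And>t j. \<bar>h1 t j\<bar> \<le> B1" "\<And>t j. \<bar>h2 t j\<bar> \<le> B2"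
  shows "harmonic (\<lambda>t j. h1 t j - h2 t j)"
  unfolding harmonic_def
proof (intro allI)
  fix t j
  let ?E = "\<lambda>h. measure_pmf.expectation \<theta> (\<lambda>k. \<Sum>i\<in>UNIV. rev_kernel k i j * h (t - int k) i)"
  have "h1 t j = ?E h1" "h2 t j = ?E h2"
    using assms(1,2) unfolding harmonic_def by blast+
  moreover have "?E (\<lambda>t j. h1 t j - h2 t j) = ?E h1 - ?E h2"
    unfolding right_diff_distrib sum_subtractf
    by (rule Bochner_Integration.integral_diff[OF integrable_rev_kernel[OF assms(3)]
          integrable_rev_kernel[OF assms(4)]])
  ultimately show "h1 t j - h2 t j = ?E (\<lambda>t j. h1 t j - h2 t j)" by simp
qed

lemma harmonic_uminus:
  assumes "harmonic h"
  shows "harmonic (\<lambda>t j. - h t j)"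
  unfolding harmonic_def
proof (intro allI)
  fix t j
  have "h t j = measure_pmf.expectation \<theta> (\<lambda>k. \<Sum>i\<in>UNIV. rev_kernel k i j * h (t - int k) i)"
    using assms unfolding harmonic_def by blast
  then show "- h t j = measure_pmf.expectation \<theta> (\<lambda>k. \<Sum>i\<in>UNIV. rev_kernel k i j * - h (t - int k) i)"
    by (simp add: sum_negf)
qed

lemma harmonic_shift:
  assumes "harmonic h"
  shows "harmonic (\<lambda>t j. h (t - a) j)"
  unfolding harmonic_def
proof (intro allI)
  fix t j
  have h: "h (t - a) j = measure_pmf.expectation \<theta> (\<lambda>k. \<Sum>i\<in>UNIV. rev_kernel k i j * h (t - a - int k) i)"
    using assms unfolding harmonic_def by blast
  have "(\<lambda>k. \<Sum>i\<in>UNIV. rev_kernel k i j * h (t - int k - a) i)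
      = (\<lambda>k. \<Sum>i\<in>UNIV. rev_kernel k i j * h (t - a - int k) i)"
    by (simp add: algebra_simps)
  then show "h (t - a) j = measure_pmf.expectation \<theta> (\<lambda>k. \<Sum>i\<in>UNIV. rev_kernel k i j * h (t - int k - a) i)"
    using h by simp
qed

text \<open>One step of the maximum principle: if \<open>g \<le> M\<close> and \<open>g\<close> is close to \<open>M\<close> at \<open>(t, j)\<close>,
  then so is it at every predecessor \<open>(t - k, i)\<close> of positive weight.\<close>
lemma harmonic_sup_step:
  assumes "harmonic g" "\<And>t j. \<bar>g t j\<bar> \<le> B" "\<And>t j. g t j \<le> M"
  shows "pmf \<theta> k * rev_kernel k i j * (M - g (t - int k) i) \<le> M - g t j"
proof -
  define f where "f k = (\<Sum>i\<in>UNIV. rev_kernel k i j * (M - g (t - int k) i))" for k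
  have f_eq: "f = (\<lambda>k. M * (\<Sum>i\<in>UNIV. rev_kernel k i j) - (\<Sum>i\<in>UNIV. rev_kernel k i j * g (t - int k) i))"
    unfolding f_def by (simp add: sum_distrib_left sum_subtractf algebra_simps)
  have int1: "integrable (measure_pmf \<theta>) (\<lambda>k. M * (\<Sum>i\<in>UNIV. rev_kernel k i j))"
    using integrable_rev_kernel[of "\<lambda>_ _. 1" 1 j 0] by simp
  have int2: "integrable (measure_pmf \<theta>) (\<lambda>k. \<Sum>i\<in>UNIV. rev_kernel k i j * g (t - int k) i)"
    by (rule integrable_rev_kernel[OF assms(2)])
  have int_f: "integrable (measure_pmf \<theta>) f"
    unfolding f_eq using int1 int2 by (rule Bochner_Integration.integrable_diff)
  have g_eq: "g t j = measure_pmf.expectation \<theta> (\<lambda>k. \<Sum>i\<in>UNIV. rev_kernel k i j * g (t - int k) i)"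
    using assms(1) unfolding harmonic_def by blast
  have "rev_kernel k i j * (M - g (t - int k) i) \<le> f k"
    unfolding f_def by (rule member_le_sum) (auto simp: assms(3) rev_kernel_nonneg)
  then have "pmf \<theta> k * rev_kernel k i j * (M - g (t - int k) i) \<le> pmf \<theta> k * f k"
    by (simp add: mult.assoc mult_left_mono)
  also have "\<dots> \<le> measure_pmf.expectation \<theta> f"
    by (rule pmf_times_le_expectation[OF int_f]) (auto simp: f_def assms(3) rev_kernel_nonneg intro!: sum_nonneg)
  also have "\<dots> = M - g t j"
    unfolding f_eq Bochner_Integration.integral_diff[OF int1 int2]
    by (simp add: expectation_rev_kernel g_eq)
  finally show ?thesis .
qed

text \<open>\<open>back_path j s i c\<close>: a path of the reversed chain leading from state \<open>j\<close> at time \<open>t\<close>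
  to state \<open>i\<close> at time \<open>t - s\<close>, whose steps have total weight \<open>c\<close>.\<close>
inductive back_path :: "'g \<Rightarrow> nat \<Rightarrow> 'g \<Rightarrow> real \<Rightarrow> bool" where
  stop: "back_path j 0 j 1"
| step: "pmf \<theta> k > 0 \<Longrightarrow> pmf (P k h) j > 0 \<Longrightarrow> back_path h s i c \<Longrightarrow>
           back_path j (k + s) i (pmf \<theta> k * rev_kernel k h j * c)"

lemma back_path_weight: "back_path j s i c \<Longrightarrow> 0 < c \<and> c \<le> 1"
proof (induction rule: back_path.induct)
  case (step k h j s i c)
  have "0 < pmf \<theta> k * rev_kernel k h j"
    using step lam_pos by (simp add: rev_kernel_def)
  with step theta_rev_kernel_le_1[of k h j] show ?case by (simp add: mult_le_one)
qed simp

lemma back_path_trans: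
  "back_path j s h c \<Longrightarrow> back_path h s' i c' \<Longrightarrow> back_path j (s + s') i (c * c')"
proof (induction rule: back_path.induct)
  case (step k h0 j s i0 c)
  then show ?case
    using back_path.step[of k h0 j "s + s'" i "c * c'"] by (simp add: ac_simps)
qed simp

lemma back_path_power: "back_path j s j c \<Longrightarrow> back_path j (l * s) j (c ^ l)"
  by (induction l) (auto intro: back_path.stop dest: back_path_trans)

lemma back_path_word:
  assumes "set w \<subseteq> set_pmf \<theta>" "word_mat P w i j > 0"
  shows "\<exists>c. back_path j (sum_list w) i c"
  using assms
proof (induction w arbitrary: j)
  case (Cons a as)
  obtain h where h: "word_mat P as i h > 0" "pmf (P a h) j > 0"
    using word_mat_Cons_pos[OF Cons.prems(2)] by blast
  obtain c where "back_path h (sum_list as) i c"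
    using Cons h by auto
  with h(2) Cons.prems(1) have "back_path j (a + sum_list as) i (pmf \<theta> a * rev_kernel a h j * c)"
    by (intro back_path.step) (auto simp: pmf_positive)
  then show ?case by auto
qed (auto intro: back_path.stop split: if_splits)

lemma harmonic_sup_path:
  assumes "harmonic g" "\<And>t j. \<bar>g t j\<bar> \<le> B" "\<And>t j. g t j \<le> M"
  shows "back_path j s i c \<Longrightarrow> c * (M - g (t - int s) i) \<le> M - g t j"
proof (induction arbitrary: t rule: back_path.induct)
  case (step k h j s i c)
  let ?w = "pmf \<theta> k * rev_kernel k h j"
  have "?w * c * (M - g (t - int (k + s)) i) = ?w * (c * (M - g (t - int k - int s) i))"
    by (simp add: algebra_simps)
  also have "\<dots> \<le> ?w * (M - g (t - int k) h)"
    by (intro mult_left_mono step.IH) (simp add: rev_kernel_nonneg)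
  also have "\<dots> \<le> M - g t j"
    by (rule harmonic_sup_step[OF assms])
  finally show ?case .
qed simp

lemma harmonic_near_sup_along_loop:
  assumes g: "harmonic g" "\<And>t j. \<bar>g t j\<bar> \<le> B"
    and M: "\<And>t j. g t j \<le> M" "0 < M" "\<And>\<epsilon>. 0 < \<epsilon> \<Longrightarrow> \<exists>t j. M - \<epsilon> < g t j"
    and loops: "\<And>j. \<exists>c. back_path j a j c"
  obtains t0 j0 where "\<And>l. l < L \<Longrightarrow> M / 2 < g (t0 - int (l * a)) j0"
proof -
  obtain c where c: "\<And>j. back_path j a j (c j)" using loops by metis
  have c01: "0 < c j" "c j \<le> 1" for j using back_path_weight[OF c] by auto
  define cmin where "cmin = Min (range c)"
  have cmin: "0 < cmin" "cmin \<le> c j" for j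
    unfolding cmin_def using c01 by auto
  have "0 < cmin ^ L * M / 2"
    using cmin(1) M(2) by simp
  then obtain t0 j0 where t0: "M - cmin ^ L * M / 2 < g t0 j0"
    using M(3) by blast
  have "M / 2 < g (t0 - int (l * a)) j0" if "l < L" for l
  proof -
    have "cmin ^ L \<le> c j0 ^ L"
      using cmin by (intro power_mono) (auto simp: less_imp_le)
    also have "\<dots> \<le> c j0 ^ l"
      using that c01[of j0] by (intro power_decreasing) auto
    finally have "cmin ^ L \<le> c j0 ^ l" .
    then have "cmin ^ L * M / 2 \<le> c j0 ^ l * (M / 2)"
      using M(2) by (simp add: mult_right_mono)
    moreover have "c j0 ^ l * (M - g (t0 - int (l * a)) j0) \<le> M - g t0 j0"
      by (rule harmonic_sup_path[OF g M(1) back_path_power[OF c]])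
    ultimately have "c j0 ^ l * (M - g (t0 - int (l * a)) j0) < c j0 ^ l * (M / 2)"
      using t0 by linarith
    then show ?thesis using c01[of j0] by (simp add: mult_less_cancel_left_pos)
  qed
  then show thesis by (rule that)
qed

lemma harmonic_le_shift:
  assumes h: "harmonic h" "\<And>t j. \<bar>h t j\<bar> \<le> B"
    and loops: "\<And>j. \<exists>c. back_path j a j c"
  shows "h t j \<le> h (t - int a) j"
proof (rule ccontr)
  assume contra: "\<not> ?thesis"
  define g where "g t j = h t j - h (t - int a) j" for t j
  have g_bdd: "\<bar>g t j\<bar> \<le> 2 * B" for t j
    using h(2)[of t j] h(2)[of "t - int a" j] unfolding g_def by linarith
  have "harmonic g"
    unfolding g_def using h by (intro harmonic_diff harmonic_shift) auto
  define M where "M = (SUP p. g (fst p) (snd p))"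
  have bdd: "bdd_above (range (\<lambda>p. g (fst p) (snd p)))"
    using g_bdd by (intro bdd_aboveI2[where M="2 * B"]) (simp add: abs_le_iff)
  have g_le: "g t j \<le> M" for t j
    unfolding M_def using cSUP_upper[OF UNIV_I bdd, of "(t, j)"] by simp
  have near: "\<exists>t j. M - \<epsilon> < g t j" if "0 < \<epsilon>" for \<epsilon>
    using that less_cSUP_iff[OF _ bdd, of "M - \<epsilon>"] unfolding M_def by auto
  have "0 < M" using contra g_le[of t j] unfolding g_def by linarith
  obtain L :: nat where L: "4 * B / M < L" using reals_Archimedean2 by blast
  obtain t0 j0 where big: "\<And>l. l < L \<Longrightarrow> M / 2 < g (t0 - int (l * a)) j0"
    using harmonic_near_sup_along_loop[OF \<open>harmonic g\<close> g_bdd g_le \<open>0 < M\<close> near loops] by metis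
  have "(\<Sum>l<L. M / 2) \<le> (\<Sum>l<L. g (t0 - int (l * a)) j0)"
    by (intro sum_mono less_imp_le big) simp
  then have "real L * (M / 2) \<le> (\<Sum>l<L. g (t0 - int (l * a)) j0)"
    by simp
  also have "\<dots> = h t0 j0 - h (t0 - int (L * a)) j0"
    using sum_lessThan_telescope'[of "\<lambda>l. h (t0 - int (l * a)) j0" L]
    by (simp add: g_def algebra_simps)
  also have "\<dots> \<le> 2 * B"
    using h(2)[of t0 j0] h(2)[of "t0 - int (L * a)" j0] by linarith
  moreover have "4 * B < real L * M"
    using L \<open>0 < M\<close> by (simp add: field_simps)
  ultimately show False by linarith
qed

lemma harmonic_periodic_loop:
  assumes "harmonic h" "\<And>t j. \<bar>h t j\<bar> \<le> B" "\<And>j. \<exists>c. back_path j a j c"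
  shows "periodic h a"
proof -
  have "h t j \<le> h (t - int a) j" for t j
    by (rule harmonic_le_shift[OF assms])
  moreover have "- h t j \<le> - h (t - int a) j" for t j
    using assms(2) by (intro harmonic_le_shift[OF harmonic_uminus[OF assms(1)] _ assms(3)]) simp
  ultimately show ?thesis
    unfolding periodic_def by (auto intro!: antisym simp: fun_eq_iff)
qed

definition loop_depths :: "'g \<Rightarrow> nat set" where
  "loop_depths j = depth ` {a \<in> words (set_pmf \<theta>). word_mat P a j j > 0}"

lemma loop_depth_pos: "s \<in> loop_depths j \<Longrightarrow> 0 < s"
  using pos unfolding loop_depths_def words_def depth_def
  by (auto simp: neq_Nil_conv intro!: add_pos_nonneg gr0I)

lemma back_path_loop_product:
  assumes "\<And>i. d i \<in> loop_depths i"
  shows "\<exists>c. back_path j (\<Prod>i\<in>UNIV. d i) j c"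
proof -
  obtain w where "set w \<subseteq> set_pmf \<theta>" "word_mat P w j j > 0" "d j = sum_list w"
    using assms[of j] unfolding loop_depths_def words_def depth_def by blast
  then obtain c where c: "back_path j (d j) j c"
    using back_path_word by metis
  have "(\<Prod>i\<in>UNIV. d i) = (\<Prod>i\<in>UNIV - {j}. d i) * d j"
    by (simp add: prod.remove mult.commute)
  then show ?thesis using back_path_power[OF c] by metis
qed

lemma bounded_harmonic_const:
  assumes "harmonic h" "\<And>t j. \<bar>h t j\<bar> \<le> B"
  shows "h t = h 0"
proof -
  let ?p0 = "LEAST p. 0 < p \<and> periodic h p"
  have Gcd_loop_depths: "Gcd (loop_depths i) = 1" for i
    using aper unfolding aperiodic_sf_def loop_depths_def by blast
  then have "\<forall>i. \<exists>s. s \<in> loop_depths i"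
    by (metis Gcd_empty all_not_in_conv zero_neq_one)
  then obtain d where d: "\<And>i. d i \<in> loop_depths i" by metis
  have per: "periodic h (\<Prod>i\<in>UNIV. d i)" "0 < (\<Prod>i\<in>UNIV. d i)"
    if "\<And>i. d i \<in> loop_depths i" for d
    using harmonic_periodic_loop[OF assms back_path_loop_product[OF that]] that loop_depth_pos
    by (auto intro: prod_pos)
  have p0: "0 < ?p0 \<and> periodic h ?p0"
    using LeastI[of "\<lambda>p. 0 < p \<and> periodic h p"] per[OF d] by blast
  have "?p0 = 1"
    using Gcd_loop_depths least_period_dvd[OF per[OF d] per(1)]
    by (rule eq_1_if_dvd_choice_products)
  with p0 have "periodic h 1" by simp
  then show ?thesis by (rule periodic_1_const)
qed

lemma entire_solution_eq_lam:
  assumes "entire_solution \<theta> P \<nu>"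
  shows "\<nu> t = lam"
proof -
  define h where "h t j = pmf (\<nu> t) j / pmf lam j" for t j
  have "harmonic h"
    unfolding harmonic_def
  proof (intro allI)
    fix t j
    note \<nu>_eq = pmf_entire_solution[OF assms, of t j]
    have "rev_kernel k i j * h (t - int k) i = pmf (\<nu> (t - int k)) i * pmf (P k i) j / pmf lam j" for k i
      unfolding rev_kernel_def h_def using lam_pos[of i] lam_pos[of j] by (simp add: field_simps)
    then have "(\<lambda>k. \<Sum>i\<in>UNIV. rev_kernel k i j * h (t - int k) i)
        = (\<lambda>k. (\<Sum>i\<in>UNIV. pmf (\<nu> (t - int k)) i * pmf (P k i) j) / pmf lam j)"
      by (simp add: sum_divide_distrib)
    then show "h t j = measure_pmf.expectation \<theta> (\<lambda>k. \<Sum>i\<in>UNIV. rev_kernel k i j * h (t - int k) i)"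
      using \<nu>_eq by (simp add: h_def)
  qed
  moreover have "\<bar>h t j\<bar> \<le> (\<Sum>j\<in>UNIV. 1 / pmf lam j)" for t j
  proof -
    have "\<bar>h t j\<bar> \<le> 1 / pmf lam j"
      unfolding h_def using lam_pos[of j] by (simp add: divide_right_mono pmf_le_1)
    also have "\<dots> \<le> (\<Sum>j\<in>UNIV. 1 / pmf lam j)"
      using lam_pos by (intro member_le_sum) (auto simp: less_imp_le)
    finally show ?thesis .
  qed
  ultimately have h_const: "h t = h 0" for t by (rule bounded_harmonic_const)
  have const: "\<nu> t = \<nu> 0" for t
  proof (rule pmf_eqI)
    fix j
    have "h t j = h 0 j" by (rule fun_cong[OF h_const])
    then show "pmf (\<nu> t) j = pmf (\<nu> 0) j" using lam_pos[of j] by (simp add: h_def)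
  qed
  have "\<nu> 0 = bind_pmf \<theta> (\<lambda>k. bind_pmf (\<nu> (0 - int k)) (P k))"
    by (rule assms[unfolded entire_solution_def, rule_format])
  also have "\<dots> = bind_pmf \<theta> (\<lambda>k. bind_pmf (\<nu> 0) (P k))"
    by (rule bind_pmf_cong[OF refl]) (simp only: const[of "0 - int _"])
  finally have "invariant_dist (hatP \<theta> P) (\<nu> 0)"
    unfolding invariant_iff_entire_const entire_solution_def by (rule allI)
  then have "\<nu> 0 = lam" by (rule uniq)
  then show ?thesis using const[of t] by simp
qed

theorem law_X_tendsto:
  "((\<lambda>r. pmf (law_X \<theta> P r w n) g) \<longlongrightarrow> pmf lam g) at_bot"
proof (rule ccontr)
  assume "\<not> ?thesis"
  then obtain \<epsilon> where "\<epsilon> > 0"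
    and "\<not> eventually (\<lambda>r. dist (pmf (law_X \<theta> P r w n) g) (pmf lam g) < \<epsilon>) at_bot"
    unfolding tendsto_iff by blast
  then have "\<forall>m::nat. \<exists>r. r \<le> - int m \<and> \<epsilon> \<le> dist (pmf (law_X \<theta> P r w n) g) (pmf lam g)"
    unfolding eventually_at_bot_linorder by (auto simp: not_less)
  then obtain R where R: "\<And>m. R m \<le> - int m"
    "\<And>m. \<epsilon> \<le> dist (pmf (law_X \<theta> P (R m) w n) g) (pmf lam g)"
    by metis
  define F where "F m x = pmf (law_X \<theta> P (R m) w (fst x)) (snd x)" for m x
  have "\<bar>F m x\<bar> \<le> 1" for m x by (simp add: F_def pmf_le_1)
  then obtain \<sigma> \<nu> where \<sigma>: "strict_mono \<sigma>" and lim: "\<And>x. (\<lambda>m. F (\<sigma> m) x) \<longlonglongrightarrow> \<nu> x"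
    using bounded_seq_pointwise_convergent_subseq by blast
  have "R (\<sigma> m) < t" if "nat (1 - t) \<le> m" for t m
  proof -
    have "int m \<le> int (\<sigma> m)" using seq_suble[OF \<sigma>, of m] by simp
    then show ?thesis using R(1)[of "\<sigma> m"] that by linarith
  qed
  then have to_bot: "eventually (\<lambda>m. (R \<circ> \<sigma>) m < t) sequentially" for t
    by (auto intro: eventually_sequentiallyI)
  have lim': "(\<lambda>m. pmf (law_X \<theta> P ((R \<circ> \<sigma>) m) w t) j) \<longlonglongrightarrow> \<nu> (t, j)" for t j
    using lim[of "(t, j)"] by (simp add: F_def)
  obtain \<mu> where \<mu>: "entire_solution \<theta> P \<mu>" "\<And>t j. pmf (\<mu> t) j = \<nu> (t, j)"
    using limit_of_laws_entire_solution[OF pos to_bot lim'] by blast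
  have "\<nu> (n, g) = pmf lam g"
    using \<mu>(2)[of n g] entire_solution_eq_lam[OF \<mu>(1), of n] by simp
  then have "(\<lambda>m. F (\<sigma> m) (n, g)) \<longlonglongrightarrow> pmf lam g"
    using lim[of "(n, g)"] by simp
  then obtain m where "norm (F (\<sigma> m) (n, g) - pmf lam g) < \<epsilon>"
    using LIMSEQ_D[OF _ \<open>\<epsilon> > 0\<close>] by blast
  with R(2)[of "\<sigma> m"] show False by (simp add: F_def dist_norm)
qed

end

theorem mainTheorem7:
  fixes \<theta> :: "nat pmf" and P :: "nat \<Rightarrow> 'g::finite \<Rightarrow> 'g pmf"
    and A :: "nat set" and lam :: "'g pmf"
  assumes A_def: "A = set_pmf \<theta>"
    and A_pos: "0 \<notin> A"
    and gcd_A: "Gcd A = 1"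
    and aper: "aperiodic_sf A P"
    and inv: "invariant_dist (hatP \<theta> P) lam"
    and uniq: "\<And>\<mu>. invariant_dist (hatP \<theta> P) \<mu> \<Longrightarrow> \<mu> = lam"
  shows "\<forall>(n::int) (w::int \<Rightarrow> 'g) (g::'g).
           ((\<lambda>r. pmf (law_X \<theta> P r w n) g) \<longlongrightarrow> pmf lam g) at_bot"
proof -
  interpret imitation \<theta> P lam
  proof
    show "0 \<notin> set_pmf \<theta>" "aperiodic_sf (set_pmf \<theta>) P"
      using A_def A_pos aper by simp_all
  qed (fact inv uniq)+
  show ?thesis using law_X_tendsto by blast
qed

end
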